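(* Let $X$ be a real random variable with finite cumulative information generating function (CIGF), and let $Y=\gamma X+\delta$ with $\gamma\in\mathbb{R}\setminus\{0\}$ and $\delta\in\mathbb{R}$. Then $$G_Y(\alpha,\beta)=\begin{cases}\gamma\,G_X(\alpha,\beta), & 0<\gamma<\infty,\\ |\gamma|\,G_X(\beta,\alpha), & -\infty<\gamma<0,\end{cases}$$ for $(\alpha,\beta)\in D_X$ if $0<\gamma<\infty$, and for $(\beta,\alpha)\in D_X$ if $-\infty<\gamma<0$.
   Context: For a random variable $X$ with CDF $F(x)=\mathbb{P}(X\le x)$ and survival function $\overline F(x)=1-F(x)$, let $l=\inf\{x\in\mathbb{R}:F(x)>0\}$ and $r=\sup\{x\in\mathbb{R}:\overline F(x)>0\}$ (possibly infinite). The cumulative information generating function (CIGF) of $X$ is $G_X(\alpha,\beta)=\int_l^r [F(x)]^\alpha[\overline F(x)]^\beta\,dx$, defined on $D_X=\{(\alpha,\beta)\in\mathbb{R}^2: G_X(\alpha,\beta)<+\infty\}$. *)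

theory Defs
  imports "HOL-Probability.Probability"
begin

definition rv_cdf :: "'a measure \<Rightarrow> ('a \<Rightarrow> real) \<Rightarrow> real \<Rightarrow> real" where
  "rv_cdf M X = cdf (distr M borel X)"

definition rv_surv :: "'a measure \<Rightarrow> ('a \<Rightarrow> real) \<Rightarrow> real \<Rightarrow> real" where
  "rv_surv M X x = 1 - rv_cdf M X x"

definition supp_l :: "'a measure \<Rightarrow> ('a \<Rightarrow> real) \<Rightarrow> ereal" where
  "supp_l M X = Inf (ereal ` {x. rv_cdf M X x > 0})"

definition supp_r :: "'a measure \<Rightarrow> ('a \<Rightarrow> real) \<Rightarrow> ereal" where
  "supp_r M X = Sup (ereal ` {x. rv_surv M X x > 0})"

definition cigf :: "'a measure \<Rightarrow> ('a \<Rightarrow> real) \<Rightarrow> real \<Rightarrow> real \<Rightarrow> ennreal" where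
  "cigf M X \<alpha> \<beta> =
     (\<integral>\<^sup>+ x \<in> {x. supp_l M X < ereal x \<and> ereal x < supp_r M X}.
        ennreal (rv_cdf M X x powr \<alpha> * rv_surv M X x powr \<beta>) \<partial>lborel)"

definition cigf_dom :: "'a measure \<Rightarrow> ('a \<Rightarrow> real) \<Rightarrow> (real \<times> real) set" where
  "cigf_dom M X = {(\<alpha>, \<beta>). cigf M X \<alpha> \<beta> < \<infinity>}"

end

(* Substituting y = \<delta> + \<gamma> x in the integral defining G_Y produces the factor |\<gamma>|.
   For \<gamma> > 0 the CDF, the survival function and the support interval of Y at \<delta> + \<gamma> x are
   those of X at x. For \<gamma> < 0 the reflection interchanges the two tails:
   F_Y(\<delta> + \<gamma> x) = P(X \<ge> x) and 1 - F_Y(\<delta> + \<gamma> x) = P(X < x), which agree with 1 - F_X(x)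
   and F_X(x) off the countably many atoms of X, a Lebesgue null set. The support interval
   is invariant as well, because by one-sided continuity of the CDF, l < x < r holds exactly
   when P(X < x) > 0 and P(X > x) > 0, a condition symmetric under reflection. *)

theory Submission
  imports Defs
begin

definition supp_interval :: "'a measure \<Rightarrow> ('a \<Rightarrow> real) \<Rightarrow> real set" where
  "supp_interval M X = {x. supp_l M X < ereal x \<and> ereal x < supp_r M X}"

definition cigf_integrand :: "'a measure \<Rightarrow> ('a \<Rightarrow> real) \<Rightarrow> real \<Rightarrow> real \<Rightarrow> real \<Rightarrow> ennreal" where
  "cigf_integrand M X \<alpha> \<beta> x =
     ennreal (rv_cdf M X x powr \<alpha> * rv_surv M X x powr \<beta>) * indicator (supp_interval M X) x"

lemma cigf_eq_nn_integral_integrand: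
  "cigf M X \<alpha> \<beta> = (\<integral>\<^sup>+x. cigf_integrand M X \<alpha> \<beta> x \<partial>lborel)"
  unfolding cigf_def cigf_integrand_def supp_interval_def by simp

lemma supp_l_less_iff: "supp_l M X < ereal x \<longleftrightarrow> (\<exists>z<x. 0 < rv_cdf M X z)"
  unfolding supp_l_def Inf_less_iff by auto

lemma less_supp_r_iff: "ereal x < supp_r M X \<longleftrightarrow> (\<exists>z>x. 0 < rv_surv M X z)"
  unfolding supp_r_def less_Sup_iff by auto

lemma (in finite_borel_measure) ex_less_cdf_pos_iff:
  "(\<exists>z<x. 0 < cdf M z) \<longleftrightarrow> 0 < measure M {..<x}"
proof
  assume "\<exists>z<x. 0 < cdf M z"
  then obtain z where "z < x" "0 < cdf M z" by blast
  have "cdf M z \<le> measure M {..<x}"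
    unfolding cdf_def using \<open>z < x\<close> by (intro finite_measure_mono) auto
  with \<open>0 < cdf M z\<close> show "0 < measure M {..<x}" by simp
next
  assume "0 < measure M {..<x}"
  then have "eventually (\<lambda>z. 0 < cdf M z) (at_left x)"
    by (rule order_tendstoD(1)[OF cdf_at_left])
  then obtain b where "b < x" "\<forall>z>b. z < x \<longrightarrow> 0 < cdf M z"
    unfolding eventually_at_left_field by blast
  then show "\<exists>z<x. 0 < cdf M z"
    by (intro exI[of _ "(b + x) / 2"]) auto
qed

lemma (in real_distribution) ex_greater_cdf_less_1_iff:
  "(\<exists>z>x. cdf M z < 1) \<longleftrightarrow> cdf M x < 1"
proof
  assume "\<exists>z>x. cdf M z < 1"
  then show "cdf M x < 1"
    using cdf_nondecreasing by (meson le_less_trans less_imp_le)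
next
  assume "cdf M x < 1"
  then have "eventually (\<lambda>z. cdf M z < 1) (at_right x)"
    using cdf_is_right_cont[of x] unfolding continuous_within by (rule order_tendstoD(2)[rotated])
  then obtain b where "x < b" "\<forall>z>x. z < b \<longrightarrow> cdf M z < 1"
    unfolding eventually_at_right_field by blast
  then show "\<exists>z>x. cdf M z < 1"
    by (intro exI[of _ "(x + b) / 2"]) auto
qed

context prob_space
begin

lemma rv_cdf_eq_prob:
  fixes X :: "'a \<Rightarrow> real"
  assumes "random_variable borel X"
  shows "rv_cdf M X x = prob {\<omega>\<in>space M. X \<omega> \<le> x}"
  unfolding rv_cdf_def cdf_def using assms
  by (subst measure_distr) (auto simp: vimage_def Int_def conj_commute)

lemma rv_surv_eq_prob:
  fixes X :: "'a \<Rightarrow> real"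
  assumes "random_variable borel X"
  shows "rv_surv M X x = prob {\<omega>\<in>space M. x < X \<omega>}"
proof -
  have "space M - {\<omega>\<in>space M. X \<omega> \<le> x} = {\<omega>\<in>space M. x < X \<omega>}" by auto
  moreover have "{\<omega>\<in>space M. X \<omega> \<le> x} \<in> events" using assms by measurable
  ultimately show ?thesis unfolding rv_surv_def rv_cdf_eq_prob[OF assms]
    by (metis prob_compl)
qed

lemma borel_measurable_cigf_integrand:
  fixes X :: "'a \<Rightarrow> real"
  assumes "random_variable borel X"
  shows "cigf_integrand M X \<alpha> \<beta> \<in> borel_measurable borel"
proof -
  have "{\<omega>\<in>space M. X \<omega> \<le> x} \<in> events" for x
    using assms by measurable
  then have "mono (rv_cdf M X)"
    by (auto intro!: monoI finite_measure_mono simp: rv_cdf_eq_prob[OF assms])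
  then have [measurable]: "rv_cdf M X \<in> borel_measurable borel"
    by (rule borel_measurable_mono)
  have [measurable]: "supp_interval M X \<in> sets borel"
    unfolding supp_interval_def by measurable
  show ?thesis
    unfolding cigf_integrand_def[abs_def] rv_surv_def by measurable
qed

lemma mem_supp_interval_iff:
  fixes X :: "'a \<Rightarrow> real"
  assumes [measurable]: "random_variable borel X"
  shows "x \<in> supp_interval M X \<longleftrightarrow>
    0 < prob {\<omega>\<in>space M. X \<omega> < x} \<and> 0 < prob {\<omega>\<in>space M. x < X \<omega>}"
proof -
  interpret N: real_distribution "distr M borel X"
    using assms by simp
  have "measure (distr M borel X) {..<x} = prob {\<omega>\<in>space M. X \<omega> < x}"
    by (subst measure_distr) (auto simp: vimage_def Int_def conj_commute)
  moreover have "0 < rv_surv M X z \<longleftrightarrow> cdf (distr M borel X) z < 1" for z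
    unfolding rv_surv_def rv_cdf_def by simp
  ultimately show ?thesis
    unfolding supp_interval_def mem_Collect_eq supp_l_less_iff less_supp_r_iff
    by (simp add: rv_cdf_def N.ex_less_cdf_pos_iff N.ex_greater_cdf_less_1_iff
        flip: rv_surv_eq_prob[OF assms])
qed

lemma supp_interval_affine:
  fixes X :: "'a \<Rightarrow> real"
  assumes [measurable]: "random_variable borel X" and "\<gamma> \<noteq> 0"
  shows "\<delta> + \<gamma> * x \<in> supp_interval M (\<lambda>\<omega>. \<gamma> * X \<omega> + \<delta>) \<longleftrightarrow> x \<in> supp_interval M X"
proof -
  have [simp]: "random_variable borel (\<lambda>\<omega>. \<gamma> * X \<omega> + \<delta>)"
    by measurable
  consider "0 < \<gamma>" | "\<gamma> < 0"
    using assms(2) by linarith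
  then show ?thesis
  proof cases
    case 1
    then have "{\<omega>\<in>space M. \<gamma> * X \<omega> + \<delta> < \<delta> + \<gamma> * x} = {\<omega>\<in>space M. X \<omega> < x}"
      and "{\<omega>\<in>space M. \<delta> + \<gamma> * x < \<gamma> * X \<omega> + \<delta>} = {\<omega>\<in>space M. x < X \<omega>}"
      by auto
    then show ?thesis
      by (simp add: mem_supp_interval_iff)
  next
    case 2
    then have "{\<omega>\<in>space M. \<gamma> * X \<omega> + \<delta> < \<delta> + \<gamma> * x} = {\<omega>\<in>space M. x < X \<omega>}"
      and "{\<omega>\<in>space M. \<delta> + \<gamma> * x < \<gamma> * X \<omega> + \<delta>} = {\<omega>\<in>space M. X \<omega> < x}"
      by (auto simp: mult_less_cancel_left)
    then show ?thesis
      by (simp add: mem_supp_interval_iff conj_commute)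
  qed
qed

lemma rv_cdf_affine_pos:
  fixes X :: "'a \<Rightarrow> real"
  assumes [measurable]: "random_variable borel X" and "0 < \<gamma>"
  shows "rv_cdf M (\<lambda>\<omega>. \<gamma> * X \<omega> + \<delta>) (\<delta> + \<gamma> * x) = rv_cdf M X x"
  using assms(2) by (simp add: rv_cdf_eq_prob)

lemma rv_cdf_affine_neg:
  fixes X :: "'a \<Rightarrow> real"
  assumes [measurable]: "random_variable borel X" and "\<gamma> < 0"
    and "prob {\<omega>\<in>space M. X \<omega> = x} = 0"
  shows "rv_cdf M (\<lambda>\<omega>. \<gamma> * X \<omega> + \<delta>) (\<delta> + \<gamma> * x) = rv_surv M X x"
proof -
  have "rv_cdf M (\<lambda>\<omega>. \<gamma> * X \<omega> + \<delta>) (\<delta> + \<gamma> * x)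
      = prob ({\<omega>\<in>space M. x < X \<omega>} \<union> {\<omega>\<in>space M. X \<omega> = x})"
    using assms(2)
    by (auto simp: rv_cdf_eq_prob mult_le_cancel_left intro!: arg_cong[where f = prob])
  also have "\<dots> = prob {\<omega>\<in>space M. x < X \<omega>}"
    using assms(3) by (intro measure_zero_union) auto
  finally show ?thesis
    by (simp add: rv_surv_eq_prob)
qed

lemma rv_surv_affine_neg:
  fixes X :: "'a \<Rightarrow> real"
  assumes [measurable]: "random_variable borel X" and "\<gamma> < 0"
    and "prob {\<omega>\<in>space M. X \<omega> = x} = 0"
  shows "rv_surv M (\<lambda>\<omega>. \<gamma> * X \<omega> + \<delta>) (\<delta> + \<gamma> * x) = rv_cdf M X x"
proof -
  have "rv_cdf M X x = prob ({\<omega>\<in>space M. X \<omega> < x} \<union> {\<omega>\<in>space M. X \<omega> = x})"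
    by (auto simp: rv_cdf_eq_prob le_less intro!: arg_cong[where f = prob])
  also have "\<dots> = prob {\<omega>\<in>space M. X \<omega> < x}"
    using assms(3) by (intro measure_zero_union) auto
  finally show ?thesis
    using assms(2) by (simp add: rv_surv_eq_prob mult_less_cancel_left)
qed

lemma AE_lborel_prob_eq_0:
  fixes X :: "'a \<Rightarrow> real"
  assumes "random_variable borel X"
  shows "AE x in lborel. prob {\<omega>\<in>space M. X \<omega> = x} = 0"
proof -
  interpret N: real_distribution "distr M borel X"
    using assms by simp
  have "AE x in lborel. x \<notin> {x. 0 < measure (distr M borel X) {x}}"
    by (intro AE_not_in countable_imp_null_set_lborel N.countable_atoms)
  then show ?thesis
  proof eventually_elim
    case (elim x)
    with assms show ?case
      by (simp add: measure_distr vimage_def Int_def conj_commute not_less measure_le_0_iff)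
  qed
qed

lemma cigf_integrand_affine_pos:
  fixes X :: "'a \<Rightarrow> real"
  assumes "random_variable borel X" and "0 < \<gamma>"
  shows "cigf_integrand M (\<lambda>\<omega>. \<gamma> * X \<omega> + \<delta>) \<alpha> \<beta> (\<delta> + \<gamma> * x) = cigf_integrand M X \<alpha> \<beta> x"
  using assms
  by (simp add: cigf_integrand_def indicator_def rv_surv_def rv_cdf_affine_pos supp_interval_affine)

lemma cigf_integrand_affine_neg:
  fixes X :: "'a \<Rightarrow> real"
  assumes "random_variable borel X" and "\<gamma> < 0"
    and "prob {\<omega>\<in>space M. X \<omega> = x} = 0"
  shows "cigf_integrand M (\<lambda>\<omega>. \<gamma> * X \<omega> + \<delta>) \<alpha> \<beta> (\<delta> + \<gamma> * x) = cigf_integrand M X \<beta> \<alpha> x"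
  using assms
  by (simp add: cigf_integrand_def indicator_def rv_cdf_affine_neg rv_surv_affine_neg
      supp_interval_affine mult.commute)

lemma cigf_affine_substitution:
  assumes "random_variable borel Y" and "\<gamma> \<noteq> 0"
    and "AE x in lborel. cigf_integrand M Y \<alpha> \<beta> (\<delta> + \<gamma> * x) = cigf_integrand M X \<alpha>' \<beta>' x"
  shows "cigf M Y \<alpha> \<beta> = ennreal \<bar>\<gamma>\<bar> * cigf M X \<alpha>' \<beta>'"
proof -
  have "cigf M Y \<alpha> \<beta> = ennreal \<bar>\<gamma>\<bar> * (\<integral>\<^sup>+x. cigf_integrand M Y \<alpha> \<beta> (\<delta> + \<gamma> * x) \<partial>lborel)"
    unfolding cigf_eq_nn_integral_integrand
    by (rule nn_integral_real_affine[OF borel_measurable_cigf_integrand[OF assms(1)] assms(2)])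
  also have "\<dots> = ennreal \<bar>\<gamma>\<bar> * cigf M X \<alpha>' \<beta>'"
    unfolding cigf_eq_nn_integral_integrand using assms(3) by (simp add: nn_integral_cong_AE)
  finally show ?thesis .
qed

lemma cigf_affine_pos:
  fixes X :: "'a \<Rightarrow> real"
  assumes [measurable]: "random_variable borel X" and "0 < \<gamma>"
  shows "cigf M (\<lambda>\<omega>. \<gamma> * X \<omega> + \<delta>) \<alpha> \<beta> = ennreal \<gamma> * cigf M X \<alpha> \<beta>"
proof -
  have "cigf M (\<lambda>\<omega>. \<gamma> * X \<omega> + \<delta>) \<alpha> \<beta> = ennreal \<bar>\<gamma>\<bar> * cigf M X \<alpha> \<beta>"
    by (rule cigf_affine_substitution[where \<delta> = \<delta>])
      (use assms in \<open>simp_all add: cigf_integrand_affine_pos\<close>)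
  with assms(2) show ?thesis
    by simp
qed

lemma cigf_affine_neg:
  fixes X :: "'a \<Rightarrow> real"
  assumes [measurable]: "random_variable borel X" and "\<gamma> < 0"
  shows "cigf M (\<lambda>\<omega>. \<gamma> * X \<omega> + \<delta>) \<alpha> \<beta> = ennreal \<bar>\<gamma>\<bar> * cigf M X \<beta> \<alpha>"
proof (rule cigf_affine_substitution)
  show "AE x in lborel. cigf_integrand M (\<lambda>\<omega>. \<gamma> * X \<omega> + \<delta>) \<alpha> \<beta> (\<delta> + \<gamma> * x)
      = cigf_integrand M X \<beta> \<alpha> x"
    using AE_lborel_prob_eq_0[OF assms(1)]
    by eventually_elim (rule cigf_integrand_affine_neg[OF assms])
qed (use assms(2) in auto)

end

theorem theorem1:
  fixes M :: "'a measure" and X :: "'a \<Rightarrow> real" and \<gamma> \<delta> \<alpha> \<beta> :: real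
  assumes "prob_space M"
    and "X \<in> borel_measurable M"
    and "\<gamma> \<noteq> 0"
  shows "(0 < \<gamma> \<longrightarrow> (\<alpha>, \<beta>) \<in> cigf_dom M X \<longrightarrow>
            cigf M (\<lambda>\<omega>. \<gamma> * X \<omega> + \<delta>) \<alpha> \<beta> = ennreal \<gamma> * cigf M X \<alpha> \<beta>)
       \<and> (\<gamma> < 0 \<longrightarrow> (\<beta>, \<alpha>) \<in> cigf_dom M X \<longrightarrow>
            cigf M (\<lambda>\<omega>. \<gamma> * X \<omega> + \<delta>) \<alpha> \<beta> = ennreal \<bar>\<gamma>\<bar> * cigf M X \<beta> \<alpha>)"
  \<comment> \<open>The identities hold in [0, \<infinity>].\<close>
  using prob_space.cigf_affine_pos[OF assms(1,2)] prob_space.cigf_affine_neg[OF assms(1,2)]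
  by blast

end
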